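(* Let $A\subset\mathcal L$ with $|A|=M$, $1\le M<N$, and let $U$ be an $N\times N$ unitary matrix with entries $U_{y,z}=\frac{1}{\sqrt N}\alpha(y,z)$. Let $\xi(z)=\frac{1}{\sqrt N}(-1)^{\mathbf 1_A(z)}$ and let $\psi_k$ be the amplified state described in the context. Fix $y$ with $\sum_{z=0}^{N-1}\alpha(y,z)=0$ and $\sum_{z\in A}\alpha(y,z)\neq0$. Then $$\frac{(U\psi_k)(y)}{(U\xi)(y)}=-\frac{N}{2M}\tan\theta\,\sin(2k\theta),\qquad\text{so}\qquad \frac{|(U\psi_k)(y)|^2}{|(U\xi)(y)|^2}=\frac{N^2}{4M^2}\tan^2\theta\sin^2(2k\theta),$$ and if moreover $M\le N/2$ this ratio lies between $\frac{N}{4M}\frac{N}{N-M}(1-\frac{2M}{N})^2$ and $\frac{N}{4M}\frac{N}{N-M}$.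
   Context: $\mathcal L=\{0,1,\dots,N-1\}$, $N\ge2$. $\theta\in(0,\pi/2)$ with $\sin\theta=\sqrt{M/N}$, $k=\lfloor\pi/(4\theta)\rfloor$, $a_k=\frac{\sin((2k+1)\theta)}{\sqrt M}$, $b_k=\frac{\cos((2k+1)\theta)}{\sqrt{N-M}}$, and $\psi_k(z)=a_k$ for $z\in A$, $\psi_k(z)=b_k$ for $z\notin A$. $\mathbf 1_A$ is the indicator function of $A$. *)

theory Defs
  imports Complex_Main
begin

text \<open>Vectors and matrices over the index set L = {0,..,N-1} are represented as
  functions on nat (vectors) and nat => nat (matrices), restricted to indices < N.\<close>

definition unitary_fun :: "nat \<Rightarrow> (nat \<Rightarrow> nat \<Rightarrow> complex) \<Rightarrow> bool" where
  "unitary_fun N U \<longleftrightarrow>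
     (\<forall>y<N. \<forall>y'<N. (\<Sum>z<N. U y z * cnj (U y' z)) = (if y = y' then 1 else 0)) \<and>
     (\<forall>z<N. \<forall>z'<N. (\<Sum>y<N. cnj (U y z) * U y z') = (if z = z' then 1 else 0))"

definition mat_vec :: "nat \<Rightarrow> (nat \<Rightarrow> nat \<Rightarrow> complex) \<Rightarrow> (nat \<Rightarrow> complex) \<Rightarrow> nat \<Rightarrow> complex" where
  "mat_vec N U v y = (\<Sum>z<N. U y z * v z)"

definition grover_theta :: "nat \<Rightarrow> nat \<Rightarrow> real" where
  "grover_theta N M = arcsin (sqrt (real M / real N))"

definition grover_k :: "nat \<Rightarrow> nat \<Rightarrow> nat" where
  "grover_k N M = nat \<lfloor>pi / (4 * grover_theta N M)\<rfloor>"

definition grover_a :: "nat \<Rightarrow> nat \<Rightarrow> real" where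
  "grover_a N M = sin ((2 * real (grover_k N M) + 1) * grover_theta N M) / sqrt (real M)"

definition grover_b :: "nat \<Rightarrow> nat \<Rightarrow> real" where
  "grover_b N M = cos ((2 * real (grover_k N M) + 1) * grover_theta N M) / sqrt (real N - real M)"

definition grover_psi :: "nat \<Rightarrow> nat set \<Rightarrow> nat \<Rightarrow> complex" where
  "grover_psi N A z = complex_of_real
     (if z \<in> A then grover_a N (card A) else grover_b N (card A))"

definition grover_xi :: "nat \<Rightarrow> nat set \<Rightarrow> nat \<Rightarrow> complex" where
  "grover_xi N A z = complex_of_real ((-1) ^ (if z \<in> A then 1 else 0) / sqrt (real N))"

end

theory Submission
  imports Defs
begin

(* If the row y of U sums to zero, then applying that row to any vector that
   takes one value p on A and another value q off A gives (p - q) times the partial row sum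
   over A.  Both the amplified state psi_k (values a_k, b_k) and the phase-flipped uniform
   state xi (values -1/sqrt N, 1/sqrt N) are of this form, so the partial row sum cancels in
   the quotient, which becomes the real number -(a_k - b_k) sqrt N / 2.  Writing
   sin theta = sqrt(M/N) and cos theta = sqrt((N-M)/N), this number equals
   -(N/(2M)) tan theta sin((2k+1)theta - theta) by the subtraction formula for sine.
   For the bounds, tan^2 theta = M/(N-M), and when M <= N/2 we have theta <= pi/4, so the
   choice k = floor(pi/(4 theta)) puts 2k theta in [pi/2 - 2 theta, pi/2], whence
   1 - 2M/N = cos(2 theta) <= sin(2k theta) <= 1. *)

lemma sum_mult_two_valued:
  fixes f :: "'a \<Rightarrow> 'b::comm_ring_1"
  assumes "finite S" "A \<subseteq> S" "(\<Sum>z\<in>S. f z) = 0"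
  shows "(\<Sum>z\<in>S. f z * (if z \<in> A then p else q)) = (p - q) * (\<Sum>z\<in>A. f z)"
proof -
  have split: "\<And>g. (\<Sum>z\<in>S. g z) = (\<Sum>z\<in>A. g z) + (\<Sum>z\<in>S - A. g z)"
    using assms(1,2) by (metis add.commute sum.subset_diff)
  have compl: "(\<Sum>z\<in>S - A. f z) = - (\<Sum>z\<in>A. f z)"
    using split[of f] assms(3) by (simp add: eq_neg_iff_add_eq_0 add.commute)
  have "(\<Sum>z\<in>S. f z * (if z \<in> A then p else q))
      = (\<Sum>z\<in>A. f z) * p + (\<Sum>z\<in>S - A. f z) * q"
    by (subst split) (simp add: sum_distrib_right)
  then show ?thesis
    by (simp add: compl algebra_simps)
qed

lemma mat_vec_two_valued:
  assumes "A \<subseteq> {..<N}" "(\<Sum>z<N. U y z) = 0"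
    and "\<And>z. z < N \<Longrightarrow> v z = (if z \<in> A then p else q)"
  shows "mat_vec N U v y = (p - q) * (\<Sum>z\<in>A. U y z)"
proof -
  have "mat_vec N U v y = (\<Sum>z<N. U y z * (if z \<in> A then p else q))"
    unfolding mat_vec_def using assms(3) by (intro sum.cong) auto
  also have "\<dots> = (p - q) * (\<Sum>z\<in>A. U y z)"
    using assms(1,2) by (intro sum_mult_two_valued) auto
  finally show ?thesis .
qed

lemma arcsin_sqrt_ratio:
  fixes m n :: real
  assumes "0 < m" "m < n"
  defines "\<theta> \<equiv> arcsin (sqrt (m / n))"
  shows "sin \<theta> = sqrt (m / n)" and "cos \<theta> = sqrt ((n - m) / n)" and "0 < \<theta>"
proof -
  have s: "0 < sqrt (m / n)" "sqrt (m / n) < 1"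
    using assms(1,2) by auto
  show "sin \<theta> = sqrt (m / n)"
    unfolding \<theta>_def using s by (intro sin_arcsin) linarith+
  have "cos \<theta> = sqrt (1 - (sqrt (m / n))\<^sup>2)"
    unfolding \<theta>_def using s by (intro cos_arcsin) linarith+
  also have "1 - (sqrt (m / n))\<^sup>2 = (n - m) / n"
    using assms(1,2) by (simp add: field_simps)
  finally show "cos \<theta> = sqrt ((n - m) / n)" .
  show "0 < \<theta>"
    using s arcsin_less_mono[of 0 "sqrt (m / n)"] unfolding \<theta>_def by simp
qed

lemma tan_arcsin_sqrt_ratio:
  fixes m n :: real
  assumes "0 < m" "m < n"
  shows "(tan (arcsin (sqrt (m / n))))\<^sup>2 = m / (n - m)"
  using assms arcsin_sqrt_ratio[OF assms]
  by (simp add: tan_def power_divide)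

lemma amplitude_difference:
  fixes m n u :: real
  assumes "0 < m" "m < n"
  defines "\<theta> \<equiv> arcsin (sqrt (m / n))"
  shows "(sin u / sqrt m - cos u / sqrt (n - m)) * sqrt n = n / m * tan \<theta> * sin (u - \<theta>)"
proof -
  define s c where "s = sin \<theta>" and "c = cos \<theta>"
  have s: "s = sqrt (m / n)" and c: "c = sqrt ((n - m) / n)"
    using arcsin_sqrt_ratio[OF assms(1,2)] unfolding s_def c_def \<theta>_def by auto
  have pos: "0 < s" "0 < c" "0 < sqrt n"
    using assms(1,2) s c by auto
  have sqrt_m: "sqrt m = s * sqrt n" and sqrt_nm: "sqrt (n - m) = c * sqrt n"
    using assms(1,2) by (simp_all add: s c real_sqrt_divide)
  have n_m: "n / m = 1 / s\<^sup>2"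
    using assms(1,2) by (simp add: s)
  have "(sin u / sqrt m - cos u / sqrt (n - m)) * sqrt n = sin u / s - cos u / c"
    using pos by (simp add: sqrt_m sqrt_nm field_simps)
  also have "\<dots> = 1 / s\<^sup>2 * (s / c) * (sin u * c - cos u * s)"
    using pos by (simp add: field_simps power2_eq_square)
  also have "\<dots> = n / m * tan \<theta> * sin (u - \<theta>)"
    by (simp add: n_m tan_def sin_diff s_def c_def)
  finally show ?thesis .
qed

lemma arcsin_sqrt_ratio_le_pi4:
  fixes m n :: real
  assumes "0 < m" "2 * m \<le> n"
  shows "arcsin (sqrt (m / n)) \<le> pi / 4"
proof -
  have "sqrt (m / n) \<le> sqrt (1 / 2)"
    using assms by (intro real_sqrt_le_mono) (simp add: divide_simps)
  also have "\<dots> = sin (pi / 4)"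
    by (simp add: sin_45 real_sqrt_divide real_div_sqrt)
  finally have "arcsin (sqrt (m / n)) \<le> arcsin (sin (pi / 4))"
    using assms by (intro arcsin_le_arcsin) (auto intro: order.trans[of _ 0])
  also have "\<dots> = pi / 4"
    by (rule arcsin_sin) auto
  finally show ?thesis .
qed

text \<open>With k = floor (pi/(4 theta)) iterations, 2 k theta lies in [pi/2 - 2 theta, pi/2],
  so sin (2 k theta) is bounded below by cos (2 theta).\<close>
lemma sin_grover_iterations_ge:
  fixes \<theta> :: real
  assumes "0 < \<theta>" "\<theta> \<le> pi / 4"
  defines "k \<equiv> nat \<lfloor>pi / (4 * \<theta>)\<rfloor>"
  shows "cos (2 * \<theta>) \<le> sin (2 * real k * \<theta>)"
proof -
  have "1 \<le> pi / (4 * \<theta>)"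
    using assms(1,2) by (simp add: field_simps)
  then have k: "real k = of_int \<lfloor>pi / (4 * \<theta>)\<rfloor>"
    unfolding k_def by simp
  have "real k \<le> pi / (4 * \<theta>)"
    unfolding k by (rule of_int_floor_le)
  then have upper: "2 * real k * \<theta> \<le> pi / 2"
    using assms(1) by (simp add: field_simps)
  have "pi / (4 * \<theta>) < real k + 1"
    unfolding k by (rule real_of_int_floor_add_one_gt)
  then have lower: "pi / 2 - 2 * \<theta> \<le> 2 * real k * \<theta>"
    using assms(1) by (simp add: field_simps)
  have "cos (2 * \<theta>) = sin (pi / 2 - 2 * \<theta>)"
    by (simp add: sin_cos_eq)
  also have "\<dots> \<le> sin (2 * real k * \<theta>)"
    using upper lower assms(2) by (intro sin_monotone_2pi_le) auto
  finally show ?thesis .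
qed

text \<open>Lower bound in terms of m and n: for 2m <= n the Grover iteration count k satisfies
  (1 - 2m/n)^2 <= sin^2 (2 k theta), using cos (2 theta) = 1 - 2 sin^2 theta = 1 - 2m/n >= 0.\<close>
lemma sin_sq_grover_iterations_ge:
  fixes m n :: real
  assumes "0 < m" "2 * m \<le> n"
  defines "\<theta> \<equiv> arcsin (sqrt (m / n))"
  defines "k \<equiv> nat \<lfloor>pi / (4 * \<theta>)\<rfloor>"
  shows "(1 - 2 * m / n)\<^sup>2 \<le> (sin (2 * real k * \<theta>))\<^sup>2"
proof -
  have m_n: "m < n"
    using assms(1,2) by linarith
  have cos_double: "cos (2 * \<theta>) = 1 - 2 * m / n"
    using cos_double_sin[of \<theta>] arcsin_sqrt_ratio(1)[OF assms(1) m_n] assms(1) m_n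
    unfolding \<theta>_def by simp
  have "1 - 2 * m / n \<le> sin (2 * real k * \<theta>)"
    using sin_grover_iterations_ge[of \<theta>] arcsin_sqrt_ratio(3)[OF assms(1) m_n]
      arcsin_sqrt_ratio_le_pi4[OF assms(1,2)] cos_double
    unfolding k_def \<theta>_def by simp
  moreover have "0 \<le> 1 - 2 * m / n"
    using assms(1,2) by (simp add: divide_simps)
  ultimately show ?thesis
    by (rule power_mono)
qed

lemma grover_ratio_prefactor:
  fixes m n :: real
  assumes "0 < m" "m < n"
  shows "n\<^sup>2 / (4 * m\<^sup>2) * (tan (arcsin (sqrt (m / n))))\<^sup>2 = n / (4 * m) * (n / (n - m))"
  unfolding tan_arcsin_sqrt_ratio[OF assms] using assms by (simp add: field_simps power2_eq_square)

lemma grover_amplitude_ratio: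
  assumes "A \<subseteq> {..<N}" "card A = M" "0 < M" "M < N"
    and row: "(\<Sum>z<N. U y z) = 0" and partial: "(\<Sum>z\<in>A. U y z) \<noteq> 0"
  defines "\<theta> \<equiv> grover_theta N M" and "k \<equiv> grover_k N M"
  shows "mat_vec N U (grover_psi N A) y / mat_vec N U (grover_xi N A) y
           = complex_of_real (- (real N / (2 * real M)) * tan \<theta> * sin (2 * real k * \<theta>))"
    (is "_ = complex_of_real ?r")
proof -
  let ?S = "\<Sum>z\<in>A. U y z"
  have M_N: "0 < real M" "real M < real N"
    using assms(3,4) by auto
  have psi: "mat_vec N U (grover_psi N A) y = complex_of_real (grover_a N M - grover_b N M) * ?S"
    unfolding of_real_diff
    by (rule mat_vec_two_valued[where U = U and y = y, OF assms(1) row])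
      (simp add: grover_psi_def assms(2))
  have minus_two: "complex_of_real (- 2 / sqrt (real N))
      = complex_of_real (- 1 / sqrt (real N)) - complex_of_real (1 / sqrt (real N))"
    by (simp flip: of_real_diff)
  have xi: "mat_vec N U (grover_xi N A) y = complex_of_real (- 2 / sqrt (real N)) * ?S"
    unfolding minus_two
    by (rule mat_vec_two_valued[where U = U and y = y, OF assms(1) row]) (simp add: grover_xi_def)
  have "(2 * real k + 1) * \<theta> - \<theta> = 2 * real k * \<theta>"
    by (simp add: algebra_simps)
  then have amplitude_ratio: "(grover_a N M - grover_b N M) / (- 2 / sqrt (real N)) = ?r"
    using amplitude_difference[OF M_N, of "(2 * real k + 1) * \<theta>"] M_N
    unfolding grover_a_def grover_b_def \<theta>_def k_def grover_theta_def
    by (simp add: field_simps)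
  have "mat_vec N U (grover_psi N A) y / mat_vec N U (grover_xi N A) y
      = complex_of_real (grover_a N M - grover_b N M) / complex_of_real (- 2 / sqrt (real N))"
    unfolding psi xi using partial by (rule mult_divide_mult_cancel_right)
  also have "\<dots> = complex_of_real ?r"
    unfolding of_real_divide[symmetric] amplitude_ratio ..
  finally show ?thesis .
qed

lemma grover_ratio_sq_bounds:
  assumes "0 < M" "2 * M \<le> N"
  defines "\<theta> \<equiv> grover_theta N M" and "k \<equiv> grover_k N M"
  defines "r \<equiv> - (real N / (2 * real M)) * tan \<theta> * sin (2 * real k * \<theta>)"
  shows "real N / (4 * real M) * (real N / (real N - real M)) * (1 - 2 * real M / real N)\<^sup>2 \<le> r\<^sup>2"
    and "r\<^sup>2 \<le> real N / (4 * real M) * (real N / (real N - real M))"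
proof -
  let ?C = "real N / (4 * real M) * (real N / (real N - real M))"
  have M_N: "0 < real M" "real M < real N"
    using assms(1,2) by auto
  have "r\<^sup>2 = (real N)\<^sup>2 / (4 * (real M)\<^sup>2) * (tan \<theta>)\<^sup>2 * (sin (2 * real k * \<theta>))\<^sup>2"
    unfolding r_def by (simp add: power_mult_distrib power_divide)
  also have "\<dots> = ?C * (sin (2 * real k * \<theta>))\<^sup>2"
    using grover_ratio_prefactor[OF M_N] unfolding \<theta>_def grover_theta_def by simp
  finally have r_sq: "r\<^sup>2 = ?C * (sin (2 * real k * \<theta>))\<^sup>2" .
  have lower: "(1 - 2 * real M / real N)\<^sup>2 \<le> (sin (2 * real k * \<theta>))\<^sup>2"
    using sin_sq_grover_iterations_ge[of "real M" "real N"] assms(1,2)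
    unfolding \<theta>_def k_def grover_theta_def grover_k_def by simp
  have upper: "(sin (2 * real k * \<theta>))\<^sup>2 \<le> 1"
    by (simp add: abs_square_le_1)
  have C_nonneg: "0 \<le> ?C"
    using M_N by simp
  show "?C * (1 - 2 * real M / real N)\<^sup>2 \<le> r\<^sup>2"
    unfolding r_sq using mult_left_mono[OF lower C_nonneg] .
  show "r\<^sup>2 \<le> ?C"
    unfolding r_sq using mult_left_mono[OF upper C_nonneg] by simp
qed

theorem mainTheorem8:
  fixes N M :: nat and A :: "nat set" and \<alpha> :: "nat \<Rightarrow> nat \<Rightarrow> complex" and y :: nat
  assumes "N \<ge> 2"
    and "A \<subseteq> {..<N}" and "card A = M" and "1 \<le> M" and "M < N"
    and "unitary_fun N (\<lambda>y z. \<alpha> y z / complex_of_real (sqrt (real N)))"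
    and "y < N"
    and "(\<Sum>z<N. \<alpha> y z) = 0"
    and "(\<Sum>z\<in>A. \<alpha> y z) \<noteq> 0"
  defines "U \<equiv> (\<lambda>y z. \<alpha> y z / complex_of_real (sqrt (real N)))"
    and "\<theta> \<equiv> grover_theta N M"
    and "k \<equiv> grover_k N M"
  shows "mat_vec N U (grover_psi N A) y / mat_vec N U (grover_xi N A) y
           = complex_of_real (- (real N / (2 * real M)) * tan \<theta> * sin (2 * real k * \<theta>))
         \<and> (cmod (mat_vec N U (grover_psi N A) y))\<^sup>2 / (cmod (mat_vec N U (grover_xi N A) y))\<^sup>2
           = (real N)\<^sup>2 / (4 * (real M)\<^sup>2) * (tan \<theta>)\<^sup>2 * (sin (2 * real k * \<theta>))\<^sup>2
         \<and> (2 * M \<le> N \<longrightarrow>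
         real N / (4 * real M) * (real N / (real N - real M)) * (1 - 2 * real M / real N)\<^sup>2
           \<le> (cmod (mat_vec N U (grover_psi N A) y))\<^sup>2 / (cmod (mat_vec N U (grover_xi N A) y))\<^sup>2
         \<and> (cmod (mat_vec N U (grover_psi N A) y))\<^sup>2 / (cmod (mat_vec N U (grover_xi N A) y))\<^sup>2
           \<le> real N / (4 * real M) * (real N / (real N - real M)))"
proof -
  define r where "r = - (real N / (2 * real M)) * tan \<theta> * sin (2 * real k * \<theta>)"
  have row: "(\<Sum>z<N. U y z) = 0" and partial: "(\<Sum>z\<in>A. U y z) \<noteq> 0"
    using assms(1,8,9) unfolding U_def by (simp_all flip: sum_divide_distrib)
  have M_pos: "0 < M"
    using assms(4) by simp
  have ratio: "mat_vec N U (grover_psi N A) y / mat_vec N U (grover_xi N A) y = complex_of_real r"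
    using grover_amplitude_ratio[where U = U and y = y, OF assms(2,3) M_pos assms(5) row partial]
    unfolding r_def \<theta>_def k_def .
  then have ratio_sq: "(cmod (mat_vec N U (grover_psi N A) y))\<^sup>2
      / (cmod (mat_vec N U (grover_xi N A) y))\<^sup>2 = r\<^sup>2"
    by (metis norm_divide norm_of_real power_divide power2_abs)
  have r_sq: "r\<^sup>2 = (real N)\<^sup>2 / (4 * (real M)\<^sup>2) * (tan \<theta>)\<^sup>2 * (sin (2 * real k * \<theta>))\<^sup>2"
    unfolding r_def by (simp add: power_mult_distrib power_divide)
  have bounds: "2 * M \<le> N \<longrightarrow>
      real N / (4 * real M) * (real N / (real N - real M)) * (1 - 2 * real M / real N)\<^sup>2 \<le> r\<^sup>2
      \<and> r\<^sup>2 \<le> real N / (4 * real M) * (real N / (real N - real M))"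
    using grover_ratio_sq_bounds[OF M_pos] unfolding r_def \<theta>_def k_def by blast
  show ?thesis
    unfolding ratio ratio_sq r_def[symmetric] using r_sq bounds by blast
qed

end
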